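(* Let $\delta_1\in(0,1)$, $\epsilon_1>0$, and $$\theta_1=\frac{4\,\hat{INF}_F\,\log(1/\delta_1)}{\epsilon_1^2(1-\epsilon')\,OPT}.$$ Let $\mathcal R$ be a collection of $\theta$ independent random RDR sets, where $\theta\ge\theta_1$. Then, with probability at least $1-\delta_1$, $$n\cdot F_{\mathcal R}(S^o)\ \ge\ (1-\epsilon')(1-\epsilon_1)\cdot OPT .$$
   Context: Setting: $G=(V,E)$ is a directed graph with $n=|V|$ nodes. A misinformation campaign $F$ with seed set $S_F$ spreads in $G$ under the paper's competitive propagation model (TCIC), and $INF_F$ is the expected number of nodes reached by $F$. $\sigma(\cdot)$ denotes either of the two submodular set functions (the lower bound $\underline\mu$ or the upper bound $\overline\mu$ of the expected misinformation-mitigation function $\mu(S)$ of a mitigation seed set $S\subseteq V$). $k$ is a positive integer. $S^o$ is a size-$k$ node set that maximizes $\sigma$, and $OPT=\sigma(S^o)$. $\hat{INF}_F$ is an $(\epsilon',\delta')$-approximation of $INF_F$, and $\Gamma=\hat{INF}_F/INF_F$; throughout, $\hat{INF}_F$ is treated as fixed with $1-\epsilon'\le\Gamma\le1+\epsilon'$, and $\hat{INF}_F\le n$. A random RDR (reverse-reachable, weighted) set is generated by importance sampling; for a node set $S$ and the $i$-th RDR set of a collection, $\hat Z_i(S)\ge 0$ denotes its importance-sampling reward estimator ($\hat{INF}_F/n$ times the weight of that RDR set covered by $S$). For a collection $\mathcal R$ of $\theta$ independent random RDR sets, $F_{\mathcal R}(S)=\frac1\theta\sum_{i=1}^\theta\hat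 Z_i(S)$. Properties used: (i) $\mathbb E[\hat Z_i(S)]=\Gamma\,\sigma(S)/n$; (ii) for $p=\mathbb E[\hat Z_i(S)]$ and every $\lambda>0$: $\Pr[\sum_i\hat Z_i(S)-\theta p\ge\lambda]\le\exp\!\big(-\lambda^2/(\tfrac23\lambda+4\theta p\,\hat{INF}_F/n)\big)$ and $\Pr[\sum_i\hat Z_i(S)-\theta p\le-\lambda]\le\exp\!\big(-\lambda^2/(4\theta p\,\hat{INF}_F/n)\big)$. *)

theory Defs
  imports "HOL-Probability.Probability"
begin

text \<open>Z S i \<omega> is the importance-sampling reward estimator of the i-th random RDR set
  (i = 0,1,2,...) for the node set S, in outcome \<omega>.  A collection R of
  \<theta> independent RDR sets corresponds to the first \<theta> indices.\<close>

definition F_R :: "('v set \<Rightarrow> nat \<Rightarrow> 'a \<Rightarrow> real) \<Rightarrow> nat \<Rightarrow> 'v set \<Rightarrow> 'a \<Rightarrow> real" where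
  "F_R Z \<theta> S \<omega> = (1 / real \<theta>) * (\<Sum>i<\<theta>. Z S i \<omega>)"

end

theory Submission
  imports Defs
begin

text \<open>Apply the lower-tail bound to the optimal set with deviation \<open>\<lambda> = \<epsilon>\<^sub>1 \<theta> p\<close>, where
  \<open>p = \<Gamma> OPT / n\<close> is the mean of one estimator. The exponent \<open>\<lambda>\<^sup>2 / (4 \<theta> p INF\<^sub>F/n)\<close>
  becomes \<open>\<epsilon>\<^sub>1\<^sup>2 \<theta> \<Gamma> OPT / (4 INF\<^sub>F)\<close>, which is at least \<open>ln (1/\<delta>\<^sub>1)\<close> because
  \<open>\<Gamma> \<ge> 1 - \<epsilon>'\<close> and \<open>\<theta> \<ge> \<theta>\<^sub>1\<close>. Outside this bad event the empirical mean exceeds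
  \<open>(1 - \<epsilon>\<^sub>1) p \<ge> (1 - \<epsilon>\<^sub>1)(1 - \<epsilon>') OPT / n\<close>.\<close>

lemma chernoff_lower_exponent_ge_ln:
  fixes \<epsilon> t p a n \<gamma> \<delta> :: real
  assumes "0 < t" "0 < a" "0 < n" "0 < \<gamma>" "\<gamma> \<le> p * n" "\<epsilon> \<noteq> 0"
    and "4 * a * ln (1 / \<delta>) / (\<epsilon>\<^sup>2 * \<gamma>) \<le> t"
  shows "ln (1 / \<delta>) \<le> (\<epsilon> * t * p)\<^sup>2 / (4 * t * p * a / n)"
proof -
  have "0 < p"
    using assms(3-5) by (metis less_le_trans zero_less_mult_pos2)
  have "ln (1 / \<delta>) \<le> \<epsilon>\<^sup>2 * t * \<gamma> / (4 * a)"
    using assms by (simp add: pos_divide_le_eq pos_le_divide_eq mult.commute mult.left_commute)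
  also have "\<dots> \<le> \<epsilon>\<^sup>2 * t * (p * n) / (4 * a)"
    using assms by (intro divide_right_mono mult_left_mono) auto
  also have "\<dots> = (\<epsilon> * t * p)\<^sup>2 / (4 * t * p * a / n)"
    using assms \<open>0 < p\<close> by (simp add: field_simps power2_eq_square)
  finally show ?thesis .
qed

lemma (in prob_space) prob_relative_lower_deviation_le:
  fixes X :: "'a \<Rightarrow> real"
  assumes tail: "prob {\<omega> \<in> space M. X \<omega> - t * p \<le> - (\<epsilon> * t * p)}
                   \<le> exp (- ((\<epsilon> * t * p)\<^sup>2 / (4 * t * p * a / n)))"
    and "0 < \<delta>" "0 < t" "0 < a" "0 < n" "0 < \<gamma>" "\<gamma> \<le> p * n" "\<epsilon> \<noteq> 0"
    and "4 * a * ln (1 / \<delta>) / (\<epsilon>\<^sup>2 * \<gamma>) \<le> t"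
  shows "prob {\<omega> \<in> space M. X \<omega> \<le> (1 - \<epsilon>) * t * p} \<le> \<delta>"
proof -
  have "{\<omega> \<in> space M. X \<omega> \<le> (1 - \<epsilon>) * t * p} = {\<omega> \<in> space M. X \<omega> - t * p \<le> - (\<epsilon> * t * p)}"
    by (auto simp: algebra_simps)
  also note tail
  also have "exp (- ((\<epsilon> * t * p)\<^sup>2 / (4 * t * p * a / n))) \<le> exp (- ln (1 / \<delta>))"
    using chernoff_lower_exponent_ge_ln assms(3-) by simp
  also have "\<dots> = \<delta>"
    using \<open>0 < \<delta>\<close> by (simp add: ln_div)
  finally show ?thesis .
qed

lemma scaled_mean_ge_of_sum_gt_lower_deviation:
  fixes X t p n \<gamma> \<epsilon> :: real
  assumes "0 \<le> X" "(1 - \<epsilon>) * t * p < X" "0 < t" "0 < n" "0 \<le> \<gamma>" "\<gamma> \<le> p * n"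
  shows "(1 - \<epsilon>) * \<gamma> \<le> n * (1 / t * X)"
proof (cases "\<epsilon> \<le> 1")
  case True
  then have "(1 - \<epsilon>) * \<gamma> \<le> (1 - \<epsilon>) * (p * n)"
    using assms by (intro mult_left_mono) auto
  also have "\<dots> = n * (1 / t * ((1 - \<epsilon>) * t * p))"
    using assms by simp
  also have "\<dots> \<le> n * (1 / t * X)"
    using assms by (intro mult_left_mono) auto
  finally show ?thesis .
next
  case False
  then have "(1 - \<epsilon>) * \<gamma> \<le> 0"
    using assms by (simp add: mult_nonpos_nonneg)
  also have "0 \<le> n * (1 / t * X)"
    using assms by simp
  finally show ?thesis .
qed

lemma (in prob_space) prob_ge_one_minus_of_failure_le:
  assumes "{\<omega> \<in> space M. P \<omega>} \<in> events" "{\<omega> \<in> space M. Q \<omega>} \<in> events"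
    and "prob {\<omega> \<in> space M. Q \<omega>} \<le> \<delta>"
    and "\<And>\<omega>. \<omega> \<in> space M \<Longrightarrow> \<not> Q \<omega> \<Longrightarrow> P \<omega>"
  shows "1 - \<delta> \<le> prob {\<omega> \<in> space M. P \<omega>}"
proof -
  have "1 - \<delta> \<le> prob (space M - {\<omega> \<in> space M. Q \<omega>})"
    using assms(2,3) by (simp add: prob_compl)
  also have "\<dots> \<le> prob {\<omega> \<in> space M. P \<omega>}"
    using assms(1,4) by (intro finite_measure_mono) auto
  finally show ?thesis .
qed

theorem mainTheorem1:
  fixes M :: "'a measure"
    and V :: "'v set"
    and \<sigma> :: "'v set \<Rightarrow> real"
    and k :: nat
    and So :: "'v set"
    and Z :: "'v set \<Rightarrow> nat \<Rightarrow> 'a \<Rightarrow> real"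
    and INF_F INFhat_F eps' \<delta>1 \<epsilon>1 :: real
    and \<theta> :: nat
  assumes "prob_space M"
    and "finite V"
    and "0 < k"
    and "So \<subseteq> V" and "card So = k"
    and "\<forall>S. S \<subseteq> V \<and> card S = k \<longrightarrow> \<sigma> S \<le> \<sigma> So"
    and "0 < \<sigma> So"
    and "0 < eps'" and "eps' < 1"
    and "0 < INF_F"
    and "1 - eps' \<le> INFhat_F / INF_F" and "INFhat_F / INF_F \<le> 1 + eps'"
    and "INFhat_F \<le> real (card V)"
    and "\<forall>S i. \<forall>\<omega>\<in>space M. 0 \<le> Z S i \<omega>"
    and "\<forall>S i. Z S i \<in> borel_measurable M"
    and "\<forall>S. prob_space.indep_vars M (\<lambda>_. borel) (Z S) UNIV"
    and "\<forall>S i. S \<subseteq> V \<longrightarrow>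
           integral\<^sup>L M (Z S i) = (INFhat_F / INF_F) * \<sigma> S / real (card V)"
    and "\<forall>S t lam. S \<subseteq> V \<and> 0 < lam \<longrightarrow>
           measure M {\<omega> \<in> space M.
              (\<Sum>i<t. Z S i \<omega>) - real t * ((INFhat_F / INF_F) * \<sigma> S / real (card V)) \<ge> lam}
           \<le> exp (- (lam^2 / (2/3 * lam + 4 * real t * ((INFhat_F / INF_F) * \<sigma> S / real (card V))
                                  * INFhat_F / real (card V))))"
    and "\<forall>S t lam. S \<subseteq> V \<and> 0 < lam \<longrightarrow>
           measure M {\<omega> \<in> space M.
              (\<Sum>i<t. Z S i \<omega>) - real t * ((INFhat_F / INF_F) * \<sigma> S / real (card V)) \<le> - lam}
           \<le> exp (- (lam^2 / (4 * real t * ((INFhat_F / INF_F) * \<sigma> S / real (card V))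
                                  * INFhat_F / real (card V))))"
    and "0 < \<delta>1" and "\<delta>1 < 1"
    and "0 < \<epsilon>1"
    and "real \<theta> \<ge> 4 * INFhat_F * ln (1 / \<delta>1) / (\<epsilon>1^2 * (1 - eps') * \<sigma> So)"
  shows "measure M {\<omega> \<in> space M.
            real (card V) * F_R Z \<theta> So \<omega> \<ge> (1 - eps') * (1 - \<epsilon>1) * \<sigma> So} \<ge> 1 - \<delta>1"
proof -
  interpret prob_space M by fact
  define N where "N = real (card V)"
  define p where "p = INFhat_F / INF_F * \<sigma> So / N"
  define X where "X = (\<lambda>\<omega>. \<Sum>i<\<theta>. Z So i \<omega>)"
  have "0 < N"
    using assms(2-5) card_mono[OF assms(2,4)] by (simp add: N_def)
  have "0 < INFhat_F / INF_F"
    using assms(9,11) by linarith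
  then have "0 < INFhat_F" "0 < p"
    using assms(7,10) \<open>0 < N\<close> by (simp_all add: p_def zero_less_divide_iff)
  have "0 < (1 - eps') * \<sigma> So"
    using assms(7,9) by simp
  have "p * N = INFhat_F / INF_F * \<sigma> So"
    using \<open>0 < N\<close> by (simp add: p_def)
  then have "(1 - eps') * \<sigma> So \<le> p * N"
    using assms(7,11) mult_right_mono[of "1 - eps'" "INFhat_F / INF_F" "\<sigma> So"] by simp
  have "0 < 4 * INFhat_F * ln (1 / \<delta>1) / (\<epsilon>1\<^sup>2 * (1 - eps') * \<sigma> So)"
    using \<open>0 < INFhat_F\<close> assms(7,9,20-22) by simp
  then have "0 < real \<theta>"
    using assms(23) by linarith
  have "0 < \<epsilon>1 * \<theta> * p"
    using assms(22) \<open>0 < real \<theta>\<close> \<open>0 < p\<close> by simp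
  then have bad: "prob {\<omega> \<in> space M. X \<omega> \<le> (1 - \<epsilon>1) * \<theta> * p} \<le> \<delta>1"
    unfolding X_def
    using assms(4) assms(19)[rule_format, of So "\<epsilon>1 * \<theta> * p" \<theta>, folded N_def, folded p_def]
      \<open>0 < N\<close> \<open>0 < INFhat_F\<close> \<open>0 < real \<theta>\<close> \<open>0 < (1 - eps') * \<sigma> So\<close> \<open>(1 - eps') * \<sigma> So \<le> p * N\<close>
      assms(20,22,23)
    by (intro prob_relative_lower_deviation_le) (auto simp: mult.assoc)
  have good: "(1 - eps') * (1 - \<epsilon>1) * \<sigma> So \<le> N * F_R Z \<theta> So \<omega>"
    if "\<omega> \<in> space M" "\<not> X \<omega> \<le> (1 - \<epsilon>1) * \<theta> * p" for \<omega>
    using scaled_mean_ge_of_sum_gt_lower_deviation[of "X \<omega>" \<epsilon>1 \<theta> p N "(1 - eps') * \<sigma> So"]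
      that assms(14) \<open>0 < real \<theta>\<close> \<open>0 < N\<close> \<open>0 < (1 - eps') * \<sigma> So\<close> \<open>(1 - eps') * \<sigma> So \<le> p * N\<close>
    by (auto simp: F_R_def X_def mult.commute mult.left_commute intro: sum_nonneg)
  have "\<And>i. Z So i \<in> borel_measurable M"
    using assms(15) by blast
  then show ?thesis
    unfolding N_def[symmetric]
    by (intro prob_ge_one_minus_of_failure_le[OF _ _ bad good]) (auto simp: F_R_def X_def)
qed

end
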